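(* Let $G$ be a finite nested group with chain of centers $G=X_0>X_1>\dots>X_n\ge1$. If $N$ is a normal subgroup of $G$, then for each $i=1,\dots,n$ either $[X_{i-1},G]\le N$ or $N\le X_i$.
   Context: For $\chi\in\mathrm{Irr}(G)$, $Z(\chi)=\{g\in G: |\chi(g)|=\chi(1)\}$. $G$ is nested if for all $\chi,\psi\in\mathrm{Irr}(G)$ either $Z(\chi)\le Z(\psi)$ or $Z(\psi)\le Z(\chi)$; then the distinct subgroups $Z(\chi)$, $\chi\in\mathrm{Irr}(G)$, form a chain $G=X_0>X_1>\dots>X_n\ge1$, the chain of centers. *)

theory Defs
  imports "HOL-Algebra.Algebra" "Jordan_Normal_Form.Matrix"
begin

definition is_rep :: "('a, 'b) monoid_scheme \<Rightarrow> nat \<Rightarrow> ('a \<Rightarrow> complex mat) \<Rightarrow> bool" where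
  "is_rep G d \<rho> \<longleftrightarrow>
     (\<forall>g \<in> carrier G. \<rho> g \<in> carrier_mat d d) \<and>
     \<rho> \<one>\<^bsub>G\<^esub> = 1\<^sub>m d \<and>
     (\<forall>g \<in> carrier G. \<forall>h \<in> carrier G. \<rho> (g \<otimes>\<^bsub>G\<^esub> h) = \<rho> g * \<rho> h)"

definition is_subspace :: "nat \<Rightarrow> complex vec set \<Rightarrow> bool" where
  "is_subspace d W \<longleftrightarrow> W \<subseteq> carrier_vec d \<and> 0\<^sub>v d \<in> W \<and>
     (\<forall>v \<in> W. \<forall>w \<in> W. v + w \<in> W) \<and> (\<forall>c. \<forall>v \<in> W. c \<cdot>\<^sub>v v \<in> W)"

definition irreducible_rep :: "('a, 'b) monoid_scheme \<Rightarrow> nat \<Rightarrow> ('a \<Rightarrow> complex mat) \<Rightarrow> bool" where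
  "irreducible_rep G d \<rho> \<longleftrightarrow> is_rep G d \<rho> \<and> d > 0 \<and>
     \<not> (\<exists>W. is_subspace d W \<and> W \<noteq> {0\<^sub>v d} \<and> W \<noteq> carrier_vec d \<and>
            (\<forall>g \<in> carrier G. \<forall>w \<in> W. \<rho> g *\<^sub>v w \<in> W))"

definition mat_trace :: "complex mat \<Rightarrow> complex" where
  "mat_trace A = (\<Sum>i<dim_row A. A $$ (i, i))"

definition Irr :: "('a, 'b) monoid_scheme \<Rightarrow> ('a \<Rightarrow> complex) set" where
  "Irr G = {\<chi>. \<exists>d \<rho>. irreducible_rep G d \<rho> \<and>
                (\<forall>g. \<chi> g = (if g \<in> carrier G then mat_trace (\<rho> g) else 0))}"

definition char_center :: "('a, 'b) monoid_scheme \<Rightarrow> ('a \<Rightarrow> complex) \<Rightarrow> 'a set" where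
  "char_center G \<chi> = {g \<in> carrier G. complex_of_real (cmod (\<chi> g)) = \<chi> \<one>\<^bsub>G\<^esub>}"

definition nested :: "('a, 'b) monoid_scheme \<Rightarrow> bool" where
  "nested G \<longleftrightarrow> (\<forall>\<chi> \<in> Irr G. \<forall>\<psi> \<in> Irr G.
      char_center G \<chi> \<subseteq> char_center G \<psi> \<or> char_center G \<psi> \<subseteq> char_center G \<chi>)"

definition commutator_subgroup :: "('a, 'b) monoid_scheme \<Rightarrow> 'a set \<Rightarrow> 'a set \<Rightarrow> 'a set" where
  "commutator_subgroup G A B = generate G
     (\<Union>a\<in>A. \<Union>b\<in>B. {inv\<^bsub>G\<^esub> a \<otimes>\<^bsub>G\<^esub> inv\<^bsub>G\<^esub> b \<otimes>\<^bsub>G\<^esub> a \<otimes>\<^bsub>G\<^esub> b})"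

end

theory Submission
  imports Defs "Jordan_Normal_Form.Schur_Decomposition"
begin

text \<open>Suppose N is not contained in X_i and g \<in> [X_(i-1), G] lies outside N. The permutation
  representation of G on the cosets of N is unitary, has N in its kernel and moves g. Orthogonal
  complements of invariant subspaces are invariant, so some irreducible unitary constituent \<rho>
  still moves g. Its character \<chi> satisfies N \<le> ker \<rho> \<le> Z(\<chi>) = X_j, which forces j < i and
  hence X_(i-1) \<le> Z(\<chi>). For a \<in> Z(\<chi>) the unitary matrix \<rho>(a) has trace of modulus \<chi>(1), so it
  is scalar and every commutator [a, b] lies in ker \<rho>. Thus g \<in> ker \<rho>, a contradiction.\<close>

section \<open>A Hermitian inner product on C^d\<close>

definition cinner :: "nat \<Rightarrow> complex vec \<Rightarrow> complex vec \<Rightarrow> complex" where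
  "cinner d v w = (\<Sum>r<d. v $ r * cnj (w $ r))"

definition vec_lincomb :: "nat \<Rightarrow> nat \<Rightarrow> (nat \<Rightarrow> complex) \<Rightarrow> complex vec list \<Rightarrow> complex vec" where
  "vec_lincomb d n c vs = vec d (\<lambda>r. \<Sum>l<n. c l * (vs ! l $ r))"

lemma vec_lincomb_carrier [simp]: "vec_lincomb d n c vs \<in> carrier_vec d"
  and dim_vec_lincomb [simp]: "dim_vec (vec_lincomb d n c vs) = d"
  by (simp_all add: vec_lincomb_def)

lemma cinner_vec_lincomb_left:
  "cinner d (vec_lincomb d n c vs) y = (\<Sum>l<n. c l * cinner d (vs ! l) y)"
proof -
  have "cinner d (vec_lincomb d n c vs) y = (\<Sum>r<d. \<Sum>l<n. c l * (vs ! l $ r) * cnj (y $ r))"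
    unfolding cinner_def vec_lincomb_def by (simp add: sum_distrib_right)
  also have "\<dots> = (\<Sum>l<n. \<Sum>r<d. c l * (vs ! l $ r) * cnj (y $ r))"
    by (rule sum.swap)
  finally show ?thesis
    unfolding cinner_def by (simp add: sum_distrib_left mult.assoc)
qed

lemma cinner_vec_lincomb_right:
  "cinner d y (vec_lincomb d n c vs) = (\<Sum>l<n. cnj (c l) * cinner d y (vs ! l))"
proof -
  have "cinner d y (vec_lincomb d n c vs) = (\<Sum>r<d. \<Sum>l<n. cnj (c l) * (y $ r * cnj (vs ! l $ r)))"
    unfolding cinner_def vec_lincomb_def by (simp add: sum_distrib_left mult.left_commute)
  also have "\<dots> = (\<Sum>l<n. \<Sum>r<d. cnj (c l) * (y $ r * cnj (vs ! l $ r)))"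
    by (rule sum.swap)
  finally show ?thesis
    unfolding cinner_def by (simp add: sum_distrib_left)
qed

lemma cnj_cinner: "cnj (cinner d v w) = cinner d w v"
  unfolding cinner_def by (simp add: mult.commute)

lemma cinner_smult_left: "cinner d (c \<cdot>\<^sub>v v) w = c * cinner d v w" if "v \<in> carrier_vec d"
  using that unfolding cinner_def by (auto simp: sum_distrib_left mult.assoc intro!: sum.cong)

lemma cinner_diff_left:
  assumes "v \<in> carrier_vec d" "w \<in> carrier_vec d"
  shows "cinner d (v - w) u = cinner d v u - cinner d w u"
  using assms unfolding cinner_def by (simp add: left_diff_distrib sum_subtractf)

lemma cinner_self: "cinner d v v = of_real (\<Sum>r<d. (cmod (v $ r))\<^sup>2)"
  unfolding cinner_def of_real_sum by (intro sum.cong refl) (simp only: complex_norm_square)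

lemma cinner_self_pos:
  assumes "v \<in> carrier_vec d" and "v \<noteq> 0\<^sub>v d"
  shows "0 < (\<Sum>r<d. (cmod (v $ r))\<^sup>2)"
proof -
  obtain r where r: "r < d" "v $ r \<noteq> 0"
    using assms by (metis carrier_vecD eq_vecI index_zero_vec)
  have "0 < (cmod (v $ r))\<^sup>2" using r by simp
  also have "\<dots> \<le> (\<Sum>r<d. (cmod (v $ r))\<^sup>2)"
    by (rule member_le_sum) (use r in auto)
  finally show ?thesis .
qed

lemma index_mult_mat_vec_sum:
  assumes "A \<in> carrier_mat d d" "v \<in> carrier_vec d" "i < d"
  shows "(A *\<^sub>v v) $ i = (\<Sum>j<d. A $$ (i, j) * v $ j)"
  using assms by (auto simp: scalar_prod_def atLeast0LessThan intro!: sum.cong)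

lemma mult_mat_vec_lincomb:
  assumes A: "A \<in> carrier_mat d d" and vs: "\<And>l. l < n \<Longrightarrow> vs ! l \<in> carrier_vec d"
    and "n \<le> length vs"
  shows "A *\<^sub>v vec_lincomb d n c vs = vec_lincomb d n c (map (\<lambda>v. A *\<^sub>v v) vs)"
proof (rule eq_vecI)
  fix i assume "i < dim_vec (vec_lincomb d n c (map (\<lambda>v. A *\<^sub>v v) vs))"
  then have i: "i < d" by (simp add: vec_lincomb_def)
  have "(A *\<^sub>v vec_lincomb d n c vs) $ i = (\<Sum>j<d. \<Sum>l<n. c l * (A $$ (i, j) * (vs ! l $ j)))"
    using index_mult_mat_vec_sum[OF A vec_lincomb_carrier i] i
    by (simp add: vec_lincomb_def sum_distrib_left mult.left_commute)
  also have "\<dots> = (\<Sum>l<n. c l * (A *\<^sub>v vs ! l) $ i)"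
    by (subst sum.swap) (simp add: index_mult_mat_vec_sum[OF A vs i] sum_distrib_left)
  also have "\<dots> = vec_lincomb d n c (map (\<lambda>v. A *\<^sub>v v) vs) $ i"
    using i \<open>n \<le> length vs\<close> by (simp add: vec_lincomb_def)
  finally show "(A *\<^sub>v vec_lincomb d n c vs) $ i = vec_lincomb d n c (map (\<lambda>v. A *\<^sub>v v) vs) $ i" .
qed (use A in \<open>simp add: vec_lincomb_def\<close>)

lemma vec_lincomb_in_subspace:
  assumes S: "is_subspace d S" and vs: "\<And>l. l < n \<Longrightarrow> vs ! l \<in> S"
  shows "vec_lincomb d n c vs \<in> S"
  using vs
proof (induction n)
  case 0
  have "vec_lincomb d 0 c vs = 0\<^sub>v d" by (auto simp: vec_lincomb_def)
  then show ?case using S by (simp add: is_subspace_def)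
next
  case (Suc n)
  have "vs ! n \<in> carrier_vec d" using Suc.prems S by (auto simp: is_subspace_def)
  then have "vec_lincomb d (Suc n) c vs = vec_lincomb d n c vs + c n \<cdot>\<^sub>v vs ! n"
    by (intro eq_vecI) (auto simp: vec_lincomb_def)
  also have "\<dots> \<in> S" using S Suc by (simp add: is_subspace_def)
  finally show ?case .
qed

lemma index_mat_adjoint [simp]:
  "i < dim_col A \<Longrightarrow> j < dim_row A \<Longrightarrow> mat_adjoint A $$ (i, j) = cnj (A $$ (j, i))"
  by (simp add: mat_adjoint_def mat_of_rows_def)

lemma dim_mat_adjoint [simp]:
  "dim_row (mat_adjoint A) = dim_col A" "dim_col (mat_adjoint A) = dim_row A"
  by (simp_all add: mat_adjoint_def)

lemma mat_adjoint_carrier [simp]: "A \<in> carrier_mat d d \<Longrightarrow> mat_adjoint A \<in> carrier_mat d d"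
  by (auto intro!: carrier_matI)

lemma mat_adjoint_adjoint [simp]:
  fixes A :: "complex mat"
  assumes "A \<in> carrier_mat d d" shows "mat_adjoint (mat_adjoint A) = A"
proof (rule eq_matI)
  fix i j assume "i < dim_row A" "j < dim_col A"
  then show "mat_adjoint (mat_adjoint A) $$ (i, j) = A $$ (i, j)"
    by simp
qed simp_all

lemma cinner_mult_mat_vec:
  assumes A: "A \<in> carrier_mat d d" and v: "v \<in> carrier_vec d" and w: "w \<in> carrier_vec d"
  shows "cinner d (A *\<^sub>v v) w = cinner d v (mat_adjoint A *\<^sub>v w)"
proof -
  have "cinner d (A *\<^sub>v v) w = (\<Sum>r<d. \<Sum>j<d. v $ j * (A $$ (r, j) * cnj (w $ r)))"
    unfolding cinner_def by (simp add: index_mult_mat_vec_sum[OF A v] sum_distrib_left mult_ac)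
  also have "\<dots> = (\<Sum>j<d. v $ j * cnj (\<Sum>r<d. cnj (A $$ (r, j)) * w $ r))"
    by (subst sum.swap) (simp add: sum_distrib_left)
  also have "\<dots> = cinner d v (mat_adjoint A *\<^sub>v w)"
  proof -
    have "(mat_adjoint A *\<^sub>v w) $ j = (\<Sum>r<d. cnj (A $$ (r, j)) * w $ r)" if "j < d" for j
      unfolding index_mult_mat_vec_sum[OF mat_adjoint_carrier[OF A] w that]
      using A that by (intro sum.cong refl) auto
    then show ?thesis unfolding cinner_def by simp
  qed
  finally show ?thesis .
qed

section \<open>Orthonormal bases of subspaces\<close>

definition orthonormal :: "nat \<Rightarrow> complex vec list \<Rightarrow> bool" where
  "orthonormal d vs \<longleftrightarrow> set vs \<subseteq> carrier_vec d \<and>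
     (\<forall>i<length vs. \<forall>j<length vs. cinner d (vs ! i) (vs ! j) = (if i = j then 1 else 0))"

definition orth_proj :: "nat \<Rightarrow> complex vec list \<Rightarrow> complex vec \<Rightarrow> complex vec" where
  "orth_proj d vs x = vec_lincomb d (length vs) (\<lambda>l. cinner d x (vs ! l)) vs"

definition orthonormal_basis :: "nat \<Rightarrow> complex vec list \<Rightarrow> complex vec set \<Rightarrow> bool" where
  "orthonormal_basis d vs S \<longleftrightarrow> orthonormal d vs \<and> set vs \<subseteq> S \<and> (\<forall>x\<in>S. orth_proj d vs x = x)"

lemma orth_proj_carrier [simp]: "orth_proj d vs x \<in> carrier_vec d"
  and dim_orth_proj [simp]: "dim_vec (orth_proj d vs x) = d"
  by (simp_all add: orth_proj_def)

lemma orthonormal_nth_carrier: "orthonormal d vs \<Longrightarrow> l < length vs \<Longrightarrow> vs ! l \<in> carrier_vec d"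
  by (auto simp: orthonormal_def)

lemma orthonormal_cinner:
  "orthonormal d vs \<Longrightarrow> i < length vs \<Longrightarrow> j < length vs \<Longrightarrow>
    cinner d (vs ! i) (vs ! j) = (if i = j then 1 else 0)"
  by (auto simp: orthonormal_def)

lemma orthonormal_appendD:
  assumes "orthonormal d (us @ vs)"
  shows "orthonormal d vs"
  unfolding orthonormal_def
proof (intro conjI allI impI)
  show "set vs \<subseteq> carrier_vec d" using assms by (auto simp: orthonormal_def)
  fix i j assume "i < length vs" "j < length vs"
  then show "cinner d (vs ! i) (vs ! j) = (if i = j then 1 else 0)"
    using orthonormal_cinner[OF assms, of "length us + i" "length us + j"] by (simp add: nth_append)
qed

lemma orthonormal_snoc:
  assumes vs: "orthonormal d vs" and u: "u \<in> carrier_vec d"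
    and orth: "\<And>j. j < length vs \<Longrightarrow> cinner d u (vs ! j) = 0" and unit: "cinner d u u = 1"
  shows "orthonormal d (vs @ [u])"
  unfolding orthonormal_def
proof (intro conjI allI impI)
  show "set (vs @ [u]) \<subseteq> carrier_vec d" using vs u by (auto simp: orthonormal_def)
  fix i j assume "i < length (vs @ [u])" "j < length (vs @ [u])"
  then consider "i < length vs" "j < length vs" | "i < length vs" "j = length vs"
    | "i = length vs" "j < length vs" | "i = length vs" "j = length vs"
    by fastforce
  then show "cinner d ((vs @ [u]) ! i) ((vs @ [u]) ! j) = (if i = j then 1 else 0)"
  proof cases
    case 2
    then show ?thesis using orth[of i] cnj_cinner[of d u "vs ! i"] by (simp add: nth_append)
  qed (use vs orth unit in \<open>auto simp: nth_append orthonormal_cinner\<close>)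
qed

text \<open>Padded with zero rows, an orthonormal list of length m > d is the list of columns of an
  m \<times> m matrix M with adjoint(M) M = 1. A left inverse of a square matrix is a right inverse,
  but row d of M is zero.\<close>
lemma orthonormal_length_le:
  assumes vs: "orthonormal d vs"
  shows "length vs \<le> d"
proof (rule ccontr)
  define m where "m = length vs"
  assume "\<not> length vs \<le> d"
  then have dm: "d < m" by (simp add: m_def)
  define M where "M = mat m m (\<lambda>(i, j). if i < d then vs ! j $ i else 0)"
  have M: "M \<in> carrier_mat m m" by (simp add: M_def)
  have "mat_adjoint M * M = 1\<^sub>m m"
  proof (rule eq_matI)
    fix i j assume "i < dim_row (1\<^sub>m m)" "j < dim_col (1\<^sub>m m)"
    then have i: "i < m" and j: "j < m" by auto
    have "(mat_adjoint M * M) $$ (i, j) = (\<Sum>l<m. if l < d then vs ! j $ l * cnj (vs ! i $ l) else 0)"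
      using i j M by (auto simp: M_def scalar_prod_def atLeast0LessThan intro!: sum.cong)
    also have "\<dots> = cinner d (vs ! j) (vs ! i)"
    proof -
      have "{..<m} \<inter> {l. l < d} = {..<d}" using dm by auto
      then show ?thesis
        using sum.inter_restrict[of "{..<m}" "\<lambda>l. vs ! j $ l * cnj (vs ! i $ l)" "{l. l < d}"]
        by (simp add: cinner_def)
    qed
    also have "\<dots> = 1\<^sub>m m $$ (i, j)"
      using orthonormal_cinner[OF vs] i j by (simp add: m_def)
    finally show "(mat_adjoint M * M) $$ (i, j) = 1\<^sub>m m $$ (i, j)" .
  qed (use M in auto)
  then have "M * mat_adjoint M = 1\<^sub>m m"
    using mat_mult_left_right_inverse[OF mat_adjoint_carrier[OF M] M] by simp
  moreover have "(M * mat_adjoint M) $$ (d, d) = 0"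
    using dm M by (auto simp: M_def scalar_prod_def intro!: sum.neutral)
  ultimately show False using dm by simp
qed

lemma cinner_orth_proj:
  assumes "orthonormal d vs" and "j < length vs"
  shows "cinner d (orth_proj d vs x) (vs ! j) = cinner d x (vs ! j)"
proof -
  have "cinner d (orth_proj d vs x) (vs ! j)
      = (\<Sum>l<length vs. cinner d x (vs ! l) * cinner d (vs ! l) (vs ! j))"
    unfolding orth_proj_def by (rule cinner_vec_lincomb_left)
  also have "\<dots> = (\<Sum>l<length vs. if l = j then cinner d x (vs ! j) else 0)"
    using assms by (intro sum.cong) (auto simp: orthonormal_cinner)
  finally show ?thesis using assms(2) by simp
qed

lemma orth_proj_in_subspace:
  "is_subspace d S \<Longrightarrow> set vs \<subseteq> S \<Longrightarrow> orth_proj d vs x \<in> S"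
  unfolding orth_proj_def by (rule vec_lincomb_in_subspace) auto

lemma orth_proj_Nil: "orth_proj d [] x = 0\<^sub>v d"
  by (auto simp: orth_proj_def vec_lincomb_def)

lemma cinner_smult_self:
  "v \<in> carrier_vec d \<Longrightarrow> cinner d (c \<cdot>\<^sub>v v) (c \<cdot>\<^sub>v v) = c * cnj c * cinner d v v"
  unfolding cinner_def by (auto simp: sum_distrib_left mult_ac intro!: sum.cong)

lemma exists_normalized_vec:
  assumes y: "y \<in> carrier_vec d" and "y \<noteq> 0\<^sub>v d"
  obtains c where "cinner d (c \<cdot>\<^sub>v y) (c \<cdot>\<^sub>v y) = 1"
proof
  define s where "s = (\<Sum>r<d. (cmod (y $ r))\<^sup>2)"
  have s: "0 < s" unfolding s_def by (rule cinner_self_pos) fact+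
  have "cinner d y y = of_real s" by (simp add: cinner_self s_def)
  then have "cinner d (of_real (1 / sqrt s) \<cdot>\<^sub>v y) (of_real (1 / sqrt s) \<cdot>\<^sub>v y)
      = of_real (1 / sqrt s * (1 / sqrt s) * s)"
    by (simp only: cinner_smult_self[OF y] complex_cnj_complex_of_real of_real_mult)
  also have "1 / sqrt s * (1 / sqrt s) * s = 1"
    using s by (simp add: field_simps)
  finally show "cinner d (of_real (1 / sqrt s) \<cdot>\<^sub>v y) (of_real (1 / sqrt s) \<cdot>\<^sub>v y) = 1" by simp
qed

text \<open>Gram--Schmidt step: normalise the component of x orthogonal to vs.\<close>
lemma orthonormal_extend_step:
  assumes S: "is_subspace d S" and vs: "orthonormal d vs" "set vs \<subseteq> S"
    and x: "x \<in> S" and ne: "orth_proj d vs x \<noteq> x"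
  obtains u where "u \<in> S" and "orthonormal d (vs @ [u])"
proof -
  have Sc: "S \<subseteq> carrier_vec d" using S by (simp add: is_subspace_def)
  then have xc: "x \<in> carrier_vec d" using x by auto
  define y where "y = x - orth_proj d vs x"
  have y: "y \<in> carrier_vec d" using x Sc by (auto simp: y_def)
  have "y = x + (-1) \<cdot>\<^sub>v orth_proj d vs x"
    using x Sc by (auto simp: y_def)
  then have yS: "y \<in> S"
    using S x orth_proj_in_subspace[OF S vs(2)] by (simp add: is_subspace_def)
  have "y \<noteq> 0\<^sub>v d"
  proof
    assume y0: "y = 0\<^sub>v d"
    have "x $ i = orth_proj d vs x $ i" if "i < d" for i
      using arg_cong[OF y0, of "\<lambda>v. v $ i"] that xc by (simp add: y_def)
    then have "orth_proj d vs x = x" using xc by (intro eq_vecI) auto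
    with ne show False ..
  qed
  then obtain c where unit: "cinner d (c \<cdot>\<^sub>v y) (c \<cdot>\<^sub>v y) = 1"
    using exists_normalized_vec[OF y] by blast
  have "cinner d y (vs ! j) = 0" if "j < length vs" for j
    using cinner_orth_proj[OF vs(1) that, of x] xc by (simp add: y_def cinner_diff_left)
  then have "orthonormal d (vs @ [c \<cdot>\<^sub>v y])"
    using y unit by (intro orthonormal_snoc[OF vs(1)]) (auto simp: cinner_smult_left)
  moreover have "c \<cdot>\<^sub>v y \<in> S" using S yS by (simp add: is_subspace_def)
  ultimately show ?thesis by (rule that[rotated])
qed

lemma orthonormal_basis_extend:
  assumes S: "is_subspace d S" and p: "orthonormal d p" "set p \<subseteq> S"
  obtains q where "orthonormal_basis d (p @ q) S"
proof -
  define P where "P l \<longleftrightarrow> (\<exists>q. length q = l \<and> orthonormal d (p @ q) \<and> set q \<subseteq> S)" for l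
  have "P 0" using p by (auto simp: P_def)
  moreover have "\<forall>l. P l \<longrightarrow> l < Suc d"
    using orthonormal_length_le by (fastforce simp: P_def)
  ultimately obtain l where "P l" and max: "\<And>l'. P l' \<Longrightarrow> l' \<le> l"
    using ex_has_greatest_nat by metis
  then obtain q where q: "length q = l" "orthonormal d (p @ q)" "set q \<subseteq> S"
    by (auto simp: P_def)
  have "orth_proj d (p @ q) x = x" if x: "x \<in> S" for x
  proof (rule ccontr)
    assume "orth_proj d (p @ q) x \<noteq> x"
    then obtain u where "u \<in> S" "orthonormal d ((p @ q) @ [u])"
      using orthonormal_extend_step[OF S q(2) _ x] p q by auto
    then have "P (Suc l)" unfolding P_def using q by (intro exI[of _ "q @ [u]"]) auto
    then show False using max by fastforce
  qed
  then have "orthonormal_basis d (p @ q) S" using p q by (auto simp: orthonormal_basis_def)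
  then show ?thesis by (rule that)
qed

section \<open>Complete reducibility of unitary representations\<close>

definition unitary_rep :: "('a, 'b) monoid_scheme \<Rightarrow> nat \<Rightarrow> ('a \<Rightarrow> complex mat) \<Rightarrow> bool" where
  "unitary_rep G d \<rho> \<longleftrightarrow> is_rep G d \<rho> \<and> (\<forall>h\<in>carrier G. \<rho> (inv\<^bsub>G\<^esub> h) = mat_adjoint (\<rho> h))"

definition rep_kernel :: "('a, 'b) monoid_scheme \<Rightarrow> nat \<Rightarrow> ('a \<Rightarrow> complex mat) \<Rightarrow> 'a set" where
  "rep_kernel G d \<rho> = {g \<in> carrier G. \<rho> g = 1\<^sub>m d}"

definition invariant_subspace :: "('a, 'b) monoid_scheme \<Rightarrow> ('a \<Rightarrow> complex mat) \<Rightarrow> complex vec set \<Rightarrow> bool" where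
  "invariant_subspace G \<rho> S \<longleftrightarrow> (\<forall>h\<in>carrier G. \<forall>x\<in>S. \<rho> h *\<^sub>v x \<in> S)"

text \<open>The matrix of \<rho> restricted to an invariant subspace, in an orthonormal basis vs of it.\<close>
definition restricted_rep :: "nat \<Rightarrow> ('a \<Rightarrow> complex mat) \<Rightarrow> complex vec list \<Rightarrow> 'a \<Rightarrow> complex mat" where
  "restricted_rep d \<rho> vs h = mat (length vs) (length vs) (\<lambda>(i, j). cinner d (\<rho> h *\<^sub>v vs ! j) (vs ! i))"

definition orth_compl :: "nat \<Rightarrow> complex vec set \<Rightarrow> complex vec set" where
  "orth_compl d W = {x \<in> carrier_vec d. \<forall>w\<in>W. cinner d x w = 0}"

lemma is_repD:
  assumes "is_rep G d \<rho>"
  shows is_rep_carrier: "\<And>g. g \<in> carrier G \<Longrightarrow> \<rho> g \<in> carrier_mat d d"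
    and is_rep_one: "\<rho> \<one>\<^bsub>G\<^esub> = 1\<^sub>m d"
    and is_rep_mult: "\<And>g h. g \<in> carrier G \<Longrightarrow> h \<in> carrier G \<Longrightarrow> \<rho> (g \<otimes>\<^bsub>G\<^esub> h) = \<rho> g * \<rho> h"
  using assms by (auto simp: is_rep_def)

lemma unitary_repD:
  assumes "unitary_rep G d \<rho>"
  shows "is_rep G d \<rho>" and "\<And>h. h \<in> carrier G \<Longrightarrow> \<rho> (inv\<^bsub>G\<^esub> h) = mat_adjoint (\<rho> h)"
  using assms by (auto simp: unitary_rep_def)

lemma cinner_mult_mat_vec_orth_proj:
  assumes vs: "orthonormal d vs" and A: "A \<in> carrier_mat d d" and y: "orth_proj d vs y = y"
  shows "cinner d (A *\<^sub>v y) w = (\<Sum>l<length vs. cinner d y (vs ! l) * cinner d (A *\<^sub>v vs ! l) w)"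
proof -
  have "A *\<^sub>v y = A *\<^sub>v orth_proj d vs y" using y by simp
  also have "\<dots> = vec_lincomb d (length vs) (\<lambda>l. cinner d y (vs ! l)) (map (\<lambda>v. A *\<^sub>v v) vs)"
    unfolding orth_proj_def by (rule mult_mat_vec_lincomb[OF A]) (use vs orthonormal_nth_carrier in auto)
  finally show ?thesis by (simp add: cinner_vec_lincomb_left)
qed

lemma restricted_rep_eq_one:
  assumes "orthonormal d vs" and "\<rho> g = 1\<^sub>m d"
  shows "restricted_rep d \<rho> vs g = 1\<^sub>m (length vs)"
  using assms
  by (intro eq_matI) (auto simp: restricted_rep_def orthonormal_nth_carrier orthonormal_cinner)

lemma restricted_rep_mult:
  assumes rep: "is_rep G d \<rho>" and vs: "orthonormal_basis d vs S" and inv: "invariant_subspace G \<rho> S"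
    and g: "g \<in> carrier G" and h: "h \<in> carrier G"
  shows "restricted_rep d \<rho> vs (g \<otimes>\<^bsub>G\<^esub> h) = restricted_rep d \<rho> vs g * restricted_rep d \<rho> vs h"
    (is "?\<sigma> (g \<otimes>\<^bsub>G\<^esub> h) = ?\<sigma> g * ?\<sigma> h")
proof (rule eq_matI)
  have onl: "orthonormal d vs" and span: "\<And>x. x \<in> S \<Longrightarrow> orth_proj d vs x = x"
    using vs by (auto simp: orthonormal_basis_def)
  note vc = orthonormal_nth_carrier[OF onl]
  fix i j assume "i < dim_row (?\<sigma> g * ?\<sigma> h)" "j < dim_col (?\<sigma> g * ?\<sigma> h)"
  then have i: "i < length vs" and j: "j < length vs" by (auto simp: restricted_rep_def)
  have "vs ! j \<in> S" using vs j by (auto simp: orthonormal_basis_def)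
  then have "\<rho> h *\<^sub>v vs ! j \<in> S" using inv h by (simp add: invariant_subspace_def)
  have "?\<sigma> (g \<otimes>\<^bsub>G\<^esub> h) $$ (i, j) = cinner d (\<rho> g *\<^sub>v (\<rho> h *\<^sub>v vs ! j)) (vs ! i)"
    using i j g h
    by (simp add: restricted_rep_def is_rep_mult[OF rep]
        assoc_mult_mat_vec[OF is_rep_carrier[OF rep g] is_rep_carrier[OF rep h] vc[OF j]])
  also have "\<dots> = (\<Sum>l<length vs. cinner d (\<rho> h *\<^sub>v vs ! j) (vs ! l) * cinner d (\<rho> g *\<^sub>v vs ! l) (vs ! i))"
    by (rule cinner_mult_mat_vec_orth_proj[OF onl is_rep_carrier[OF rep g] span]) fact
  also have "\<dots> = (?\<sigma> g * ?\<sigma> h) $$ (i, j)"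
    using i j by (auto simp: restricted_rep_def scalar_prod_def atLeast0LessThan intro!: sum.cong)
  finally show "?\<sigma> (g \<otimes>\<^bsub>G\<^esub> h) $$ (i, j) = (?\<sigma> g * ?\<sigma> h) $$ (i, j)" .
qed (auto simp: restricted_rep_def)

lemma restricted_rep_inv:
  assumes \<rho>: "unitary_rep G d \<rho>" and vs: "orthonormal d vs" and h: "h \<in> carrier G"
  shows "restricted_rep d \<rho> vs (inv\<^bsub>G\<^esub> h) = mat_adjoint (restricted_rep d \<rho> vs h)"
proof (rule eq_matI)
  fix i j assume "i < dim_row (mat_adjoint (restricted_rep d \<rho> vs h))"
    "j < dim_col (mat_adjoint (restricted_rep d \<rho> vs h))"
  then have i: "i < length vs" and j: "j < length vs" by (auto simp: restricted_rep_def)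
  have "restricted_rep d \<rho> vs (inv\<^bsub>G\<^esub> h) $$ (i, j) = cinner d (vs ! j) (\<rho> h *\<^sub>v vs ! i)"
    using i j unitary_repD(2)[OF \<rho> h] is_rep_carrier[OF unitary_repD(1)[OF \<rho>] h]
      orthonormal_nth_carrier[OF vs]
    by (simp add: restricted_rep_def cinner_mult_mat_vec)
  also have "\<dots> = mat_adjoint (restricted_rep d \<rho> vs h) $$ (i, j)"
    using i j by (simp add: restricted_rep_def cnj_cinner)
  finally show "restricted_rep d \<rho> vs (inv\<^bsub>G\<^esub> h) $$ (i, j) = mat_adjoint (restricted_rep d \<rho> vs h) $$ (i, j)" .
qed (auto simp: restricted_rep_def)

lemma restricted_rep_unitary:
  assumes \<rho>: "unitary_rep G d \<rho>" and vs: "orthonormal_basis d vs S"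
    and inv: "invariant_subspace G \<rho> S"
  shows "unitary_rep G (length vs) (restricted_rep d \<rho> vs)"
proof -
  note rep = unitary_repD(1)[OF \<rho>]
  have onl: "orthonormal d vs" using vs by (simp add: orthonormal_basis_def)
  show ?thesis
    unfolding unitary_rep_def is_rep_def
    using restricted_rep_eq_one[of d vs \<rho>, OF onl is_rep_one[OF rep]] restricted_rep_mult[OF rep vs inv]
      restricted_rep_inv[OF \<rho> onl]
    by (auto simp: restricted_rep_def)
qed

lemma rep_kernel_restricted_rep:
  "orthonormal d vs \<Longrightarrow> rep_kernel G d \<rho> \<subseteq> rep_kernel G (length vs) (restricted_rep d \<rho> vs)"
  by (auto simp: rep_kernel_def restricted_rep_eq_one)

lemma restricted_rep_eq_one_imp_fixes:
  assumes vs: "orthonormal_basis d vs S" and inv: "invariant_subspace G \<rho> S" and g: "g \<in> carrier G"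
    and one: "restricted_rep d \<rho> vs g = 1\<^sub>m (length vs)" and v: "v \<in> set vs"
  shows "\<rho> g *\<^sub>v v = v"
proof -
  obtain j where j: "j < length vs" and vj: "v = vs ! j" using v by (auto simp: in_set_conv_nth)
  have onl: "orthonormal d vs" using vs by (simp add: orthonormal_basis_def)
  have "\<rho> g *\<^sub>v v \<in> S" using inv g vs v by (auto simp: invariant_subspace_def orthonormal_basis_def)
  then have "\<rho> g *\<^sub>v v = orth_proj d vs (\<rho> g *\<^sub>v v)" using vs by (simp add: orthonormal_basis_def)
  also have "\<dots> = v"
  proof (rule eq_vecI)
    have vc: "v \<in> carrier_vec d" using orthonormal_nth_carrier[OF onl j] vj by simp
    then show "dim_vec (orth_proj d vs (\<rho> g *\<^sub>v v)) = dim_vec v" by simp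
    fix r assume "r < dim_vec v"
    have "cinner d (\<rho> g *\<^sub>v v) (vs ! l) = (if l = j then 1 else 0)" if "l < length vs" for l
      using arg_cong[OF one, of "\<lambda>M. M $$ (l, j)"] that j vj by (simp add: restricted_rep_def)
    then have "orth_proj d vs (\<rho> g *\<^sub>v v) $ r = (\<Sum>l<length vs. (if l = j then 1 else 0) * vs ! l $ r)"
      using \<open>r < dim_vec v\<close> vc by (simp add: orth_proj_def vec_lincomb_def)
    also have "\<dots> = (\<Sum>l<length vs. if l = j then vs ! j $ r else 0)"
      by (rule sum.cong) auto
    finally show "orth_proj d vs (\<rho> g *\<^sub>v v) $ r = v $ r" using j vj by simp
  qed
  finally show ?thesis .
qed

lemma invariant_orth_compl:
  fixes G (structure)
  assumes "group G" and \<rho>: "unitary_rep G d \<rho>" and W: "W \<subseteq> carrier_vec d"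
    and inv: "invariant_subspace G \<rho> W"
  shows "invariant_subspace G \<rho> (orth_compl d W)"
  unfolding invariant_subspace_def
proof (intro ballI)
  interpret group G by fact
  fix h x assume h: "h \<in> carrier G" and x: "x \<in> orth_compl d W"
  note A = is_rep_carrier[OF unitary_repD(1)[OF \<rho>] h]
  have "cinner d (\<rho> h *\<^sub>v x) w = 0" if w: "w \<in> W" for w
  proof -
    have "cinner d (\<rho> h *\<^sub>v x) w = cinner d x (\<rho> (inv h) *\<^sub>v w)"
      using x w W A unitary_repD(2)[OF \<rho> h] by (auto simp: orth_compl_def cinner_mult_mat_vec)
    also have "\<dots> = 0" using x w inv h by (auto simp: orth_compl_def invariant_subspace_def)
    finally show ?thesis .
  qed
  then show "\<rho> h *\<^sub>v x \<in> orth_compl d W" using A x by (auto simp: orth_compl_def)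
qed

lemma sum_lessThan_add:
  "(\<Sum>l<m + n. f l) = (\<Sum>l<m. f l) + (\<Sum>l<n. f (m + l))" for m n :: nat
  by (induction n) (auto simp: add.assoc)

lemma orthonormal_append_subset_orth_compl:
  assumes us: "orthonormal_basis d us W" and onl: "orthonormal d (us @ ws)"
  shows "set ws \<subseteq> orth_compl d W"
proof
  fix u assume "u \<in> set ws"
  then obtain j where j: "j < length ws" and u: "u = ws ! j" by (auto simp: in_set_conv_nth)
  have u_us: "cinner d u (us ! l) = 0" if "l < length us" for l
    using orthonormal_cinner[OF onl, of "length us + j" l] that j u by (simp add: nth_append)
  have "cinner d u w = 0" if "w \<in> W" for w
  proof -
    have "cinner d u w = cinner d u (orth_proj d us w)" using us that by (simp add: orthonormal_basis_def)
    also have "\<dots> = 0" using u_us by (simp add: orth_proj_def cinner_vec_lincomb_right)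
    finally show ?thesis .
  qed
  then show "u \<in> orth_compl d W" using onl \<open>u \<in> set ws\<close> by (auto simp: orth_compl_def orthonormal_def)
qed

lemma orth_proj_append_orth_compl:
  assumes us: "orthonormal_basis d us W" and x: "x \<in> orth_compl d W"
  shows "orth_proj d (us @ ws) x = orth_proj d ws x"
proof (rule eq_vecI)
  fix r assume "r < dim_vec (orth_proj d ws x)"
  have "cinner d x (us ! l) = 0" if "l < length us" for l
    using x us nth_mem[OF that] unfolding orth_compl_def orthonormal_basis_def by blast
  then show "orth_proj d (us @ ws) x $ r = orth_proj d ws x $ r"
    using \<open>r < _\<close> by (simp add: orth_proj_def vec_lincomb_def sum_lessThan_add nth_append)
qed simp

lemma orthonormal_basis_split:
  assumes W: "is_subspace d W"
  obtains us ws where "orthonormal_basis d us W" and "orthonormal_basis d ws (orth_compl d W)"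
    and "orthonormal_basis d (us @ ws) (carrier_vec d)"
proof -
  have full: "is_subspace d (carrier_vec d)" by (auto simp: is_subspace_def)
  obtain us where us: "orthonormal_basis d us W"
    using orthonormal_basis_extend[OF W, of "[]"] by (auto simp: orthonormal_def)
  moreover have "set us \<subseteq> carrier_vec d"
    using us W by (auto simp: orthonormal_basis_def is_subspace_def)
  ultimately obtain ws where uws: "orthonormal_basis d (us @ ws) (carrier_vec d)"
    using orthonormal_basis_extend[OF full] by (metis orthonormal_basis_def)
  have onl: "orthonormal d (us @ ws)" using uws by (simp add: orthonormal_basis_def)
  have "orth_proj d ws x = x" if "x \<in> orth_compl d W" for x
    using orth_proj_append_orth_compl[OF us that, of ws] uws that
    by (auto simp: orthonormal_basis_def orth_compl_def)
  then have "orthonormal_basis d ws (orth_compl d W)"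
    using orthonormal_appendD[OF onl] orthonormal_append_subset_orth_compl[OF us onl]
    by (simp add: orthonormal_basis_def)
  then show ?thesis using that us uws by blast
qed

lemma mat_eq_one_if_fixes_vecs:
  fixes A :: "complex mat"
  assumes A: "A \<in> carrier_mat d d" and fixed: "\<And>x. x \<in> carrier_vec d \<Longrightarrow> A *\<^sub>v x = x"
  shows "A = 1\<^sub>m d"
proof (rule eq_matI)
  fix i j assume "i < dim_row (1\<^sub>m d)" "j < dim_col (1\<^sub>m d)"
  then have i: "i < d" and j: "j < d" by auto
  have "A $$ (i, j) = (A *\<^sub>v unit_vec d j) $ i"
    using A i j by simp
  also have "\<dots> = 1\<^sub>m d $$ (i, j)" using fixed[of "unit_vec d j"] i j by (simp add: unit_vec_def)
  finally show "A $$ (i, j) = 1\<^sub>m d $$ (i, j)" .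
qed (use A in auto)

lemma mat_eq_one_if_fixes_orthonormal_basis:
  assumes A: "A \<in> carrier_mat d d" and vs: "orthonormal_basis d vs (carrier_vec d)"
    and fixed: "\<And>v. v \<in> set vs \<Longrightarrow> A *\<^sub>v v = v"
  shows "A = 1\<^sub>m d"
proof (rule mat_eq_one_if_fixes_vecs[OF A])
  fix x :: "complex vec" assume x: "x \<in> carrier_vec d"
  have onl: "orthonormal d vs" and span: "orth_proj d vs x = x"
    using vs x by (auto simp: orthonormal_basis_def)
  have "map (\<lambda>v. A *\<^sub>v v) vs = vs" using fixed by (simp add: map_idI)
  then have "A *\<^sub>v orth_proj d vs x = orth_proj d vs x"
    using mult_mat_vec_lincomb[OF A orthonormal_nth_carrier[OF onl], of "length vs"]
    by (simp add: orth_proj_def)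
  then show "A *\<^sub>v x = x" using span by simp
qed

lemma orthonormal_basis_Nil: "orthonormal_basis d [] S \<Longrightarrow> S \<subseteq> {0\<^sub>v d}"
  by (auto simp: orthonormal_basis_def orth_proj_Nil)

lemma orthonormal_basis_split_proper:
  assumes W: "is_subspace d W" and "W \<noteq> {0\<^sub>v d}" and "W \<noteq> carrier_vec d"
  obtains us ws where "orthonormal_basis d us W" and "orthonormal_basis d ws (orth_compl d W)"
    and "orthonormal_basis d (us @ ws) (carrier_vec d)" and "length us < d" and "length ws < d"
proof -
  obtain us ws where us: "orthonormal_basis d us W"
    and ws: "orthonormal_basis d ws (orth_compl d W)"
    and uws: "orthonormal_basis d (us @ ws) (carrier_vec d)"
    using orthonormal_basis_split[OF W] .
  have Wc: "W \<subseteq> carrier_vec d" and "0\<^sub>v d \<in> W" using W by (auto simp: is_subspace_def)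
  have "length us > 0"
  proof (rule ccontr)
    assume "\<not> length us > 0"
    then have "W \<subseteq> {0\<^sub>v d}" using us orthonormal_basis_Nil by simp
    with \<open>0\<^sub>v d \<in> W\<close> \<open>W \<noteq> {0\<^sub>v d}\<close> show False by blast
  qed
  moreover have "length ws > 0"
  proof (rule ccontr)
    assume "\<not> length ws > 0"
    then have "orth_proj d us x = x" if "x \<in> carrier_vec d" for x
      using uws that by (simp add: orthonormal_basis_def)
    moreover have "orth_proj d us x \<in> W" for x
      using orth_proj_in_subspace[OF W] us by (simp add: orthonormal_basis_def)
    ultimately have "carrier_vec d \<subseteq> W" by (metis subsetI)
    then show False using Wc \<open>W \<noteq> carrier_vec d\<close> by blast
  qed
  moreover have "length (us @ ws) \<le> d"
    using uws by (intro orthonormal_length_le) (simp add: orthonormal_basis_def)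
  ultimately have "length us < d" "length ws < d" unfolding length_append by linarith+
  with us ws uws show ?thesis by (rule that)
qed

lemma restricted_reps_eq_one_imp_eq_one:
  assumes rep: "is_rep G d \<rho>" and g: "g \<in> carrier G"
    and us: "orthonormal_basis d us U" "invariant_subspace G \<rho> U"
    and ws: "orthonormal_basis d ws V" "invariant_subspace G \<rho> V"
    and uws: "orthonormal_basis d (us @ ws) (carrier_vec d)"
    and "restricted_rep d \<rho> us g = 1\<^sub>m (length us)" "restricted_rep d \<rho> ws g = 1\<^sub>m (length ws)"
  shows "\<rho> g = 1\<^sub>m d"
proof (rule mat_eq_one_if_fixes_orthonormal_basis[OF is_rep_carrier[OF rep g] uws])
  fix v assume "v \<in> set (us @ ws)"
  then consider "v \<in> set us" | "v \<in> set ws" by auto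
  then show "\<rho> g *\<^sub>v v = v"
  proof cases
    case 1
    then show ?thesis by (rule restricted_rep_eq_one_imp_fixes[OF us g \<open>restricted_rep d \<rho> us g = _\<close>])
  next
    case 2
    then show ?thesis by (rule restricted_rep_eq_one_imp_fixes[OF ws g \<open>restricted_rep d \<rho> ws g = _\<close>])
  qed
qed

text \<open>Split off a proper invariant subspace W and its invariant orthogonal complement; g acts
  nontrivially on one of them, as otherwise it fixes an orthonormal basis of C^d.\<close>
lemma exists_irreducible_constituent:
  fixes G (structure)
  assumes G: "group G" and g: "g \<in> carrier G"
  shows "unitary_rep G d \<rho> \<Longrightarrow> \<rho> g \<noteq> 1\<^sub>m d \<Longrightarrow>
    \<exists>d' \<rho>'. unitary_rep G d' \<rho>' \<and> irreducible_rep G d' \<rho>' \<and>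
      rep_kernel G d \<rho> \<subseteq> rep_kernel G d' \<rho>' \<and> \<rho>' g \<noteq> 1\<^sub>m d'"
proof (induction d arbitrary: \<rho> rule: less_induct)
  case (less d \<rho>)
  note rep = unitary_repD(1)[OF less.prems(1)]
  show ?case
  proof (cases "irreducible_rep G d \<rho>")
    case True
    then show ?thesis using less.prems by blast
  next
    case False
    have "d > 0"
      using less.prems(2) is_rep_carrier[OF rep g] by (auto intro: eq_matI)
    with False rep obtain W where W: "is_subspace d W" "W \<noteq> {0\<^sub>v d}" "W \<noteq> carrier_vec d"
      and W_inv: "invariant_subspace G \<rho> W"
      unfolding irreducible_rep_def invariant_subspace_def by blast
    obtain us ws where us: "orthonormal_basis d us W"
      and ws: "orthonormal_basis d ws (orth_compl d W)"
      and uws: "orthonormal_basis d (us @ ws) (carrier_vec d)"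
      and lens: "length us < d" "length ws < d"
      using orthonormal_basis_split_proper[OF W] .
    have compl_inv: "invariant_subspace G \<rho> (orth_compl d W)"
      using W(1) by (intro invariant_orth_compl[OF G less.prems(1) _ W_inv]) (simp add: is_subspace_def)
    have lift: "\<exists>d' \<rho>'. unitary_rep G d' \<rho>' \<and> irreducible_rep G d' \<rho>' \<and>
        rep_kernel G d \<rho> \<subseteq> rep_kernel G d' \<rho>' \<and> \<rho>' g \<noteq> 1\<^sub>m d'"
      if vs: "orthonormal_basis d vs S" and S: "invariant_subspace G \<rho> S" and len: "length vs < d"
        and nontrivial: "restricted_rep d \<rho> vs g \<noteq> 1\<^sub>m (length vs)" for vs S
    proof -
      obtain d' \<rho>' where "unitary_rep G d' \<rho>'" "irreducible_rep G d' \<rho>'" "\<rho>' g \<noteq> 1\<^sub>m d'"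
        and ker: "rep_kernel G (length vs) (restricted_rep d \<rho> vs) \<subseteq> rep_kernel G d' \<rho>'"
        using less.IH[OF len restricted_rep_unitary[OF less.prems(1) vs S] nontrivial] by blast
      moreover have "rep_kernel G d \<rho> \<subseteq> rep_kernel G d' \<rho>'"
        using rep_kernel_restricted_rep[of d vs G \<rho>] vs ker unfolding orthonormal_basis_def by blast
      ultimately show ?thesis by (intro exI conjI)
    qed
    show ?thesis
    proof (cases "restricted_rep d \<rho> us g = 1\<^sub>m (length us) \<and>
        restricted_rep d \<rho> ws g = 1\<^sub>m (length ws)")
      case True
      then have "\<rho> g = 1\<^sub>m d"
        using restricted_reps_eq_one_imp_eq_one[OF rep g us W_inv ws compl_inv uws] by blast
      then show ?thesis using less.prems(2) by contradiction
    next
      case False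
      then show ?thesis using lift[OF us W_inv lens(1)] lift[OF ws compl_inv lens(2)] by blast
    qed
  qed
qed

section \<open>Permutation representations\<close>

definition perm_rep :: "('a \<Rightarrow> 'x \<Rightarrow> 'x) \<Rightarrow> 'x list \<Rightarrow> 'a \<Rightarrow> complex mat" where
  "perm_rep act xs h = mat (length xs) (length xs) (\<lambda>(i, j). if act h (xs ! j) = xs ! i then 1 else 0)"

lemma perm_rep_eq_one_iff:
  assumes "distinct xs"
  shows "perm_rep act xs h = 1\<^sub>m (length xs) \<longleftrightarrow> (\<forall>x\<in>set xs. act h x = x)"
proof
  assume one: "perm_rep act xs h = 1\<^sub>m (length xs)"
  show "\<forall>x\<in>set xs. act h x = x"
  proof
    fix x assume "x \<in> set xs"
    then obtain j where "j < length xs" "x = xs ! j" by (auto simp: in_set_conv_nth)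
    then show "act h x = x"
      using arg_cong[OF one, of "\<lambda>M. M $$ (j, j)"] by (simp add: perm_rep_def split: if_splits)
  qed
next
  assume "\<forall>x\<in>set xs. act h x = x"
  then show "perm_rep act xs h = 1\<^sub>m (length xs)"
    using assms by (intro eq_matI) (auto simp: perm_rep_def nth_eq_iff_index_eq)
qed

lemma perm_rep_unitary:
  fixes G (structure)
  assumes "group G" and xs: "distinct xs"
    and closed: "\<And>h x. h \<in> carrier G \<Longrightarrow> x \<in> set xs \<Longrightarrow> act h x \<in> set xs"
    and act_one: "\<And>x. x \<in> set xs \<Longrightarrow> act \<one> x = x"
    and act_mult: "\<And>g h x. g \<in> carrier G \<Longrightarrow> h \<in> carrier G \<Longrightarrow> x \<in> set xs \<Longrightarrow>
      act (g \<otimes> h) x = act g (act h x)"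
  shows "unitary_rep G (length xs) (perm_rep act xs)"
proof -
  interpret group G by fact
  let ?m = "length xs" and ?\<rho> = "perm_rep act xs"
  have mult: "?\<rho> (g \<otimes> h) = ?\<rho> g * ?\<rho> h" if g: "g \<in> carrier G" and h: "h \<in> carrier G" for g h
  proof (rule eq_matI)
    fix i j assume "i < dim_row (?\<rho> g * ?\<rho> h)" "j < dim_col (?\<rho> g * ?\<rho> h)"
    then have i: "i < ?m" and j: "j < ?m" by (auto simp: perm_rep_def)
    obtain l0 where l0: "l0 < ?m" "act h (xs ! j) = xs ! l0"
      using closed[OF h nth_mem[OF j]] by (auto simp: in_set_conv_nth)
    have "(?\<rho> g * ?\<rho> h) $$ (i, j) = (\<Sum>l<?m. ?\<rho> g $$ (i, l) * ?\<rho> h $$ (l, j))"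
      using i j by (simp add: perm_rep_def scalar_prod_def atLeast0LessThan)
    also have "\<dots> = (\<Sum>l<?m. if l = l0 then ?\<rho> g $$ (i, l0) else 0)"
      using j l0 xs by (intro sum.cong) (auto simp: perm_rep_def nth_eq_iff_index_eq)
    also have "\<dots> = ?\<rho> (g \<otimes> h) $$ (i, j)"
      using i j l0 g h by (simp add: perm_rep_def act_mult)
    finally show "?\<rho> (g \<otimes> h) $$ (i, j) = (?\<rho> g * ?\<rho> h) $$ (i, j)" ..
  qed (auto simp: perm_rep_def)
  have inv_iff: "act (inv h) y = x \<longleftrightarrow> act h x = y"
    if h: "h \<in> carrier G" and x: "x \<in> set xs" and y: "y \<in> set xs" for h x y
    using act_mult[of h "inv h" y] act_mult[of "inv h" h x] act_one x y h by auto
  have "?\<rho> (inv h) = mat_adjoint (?\<rho> h)" if h: "h \<in> carrier G" for h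
    using h by (intro eq_matI) (auto simp: perm_rep_def inv_iff)
  moreover have "?\<rho> \<one> = 1\<^sub>m ?m"
    using xs act_one by (simp add: perm_rep_eq_one_iff)
  ultimately show ?thesis
    using mult by (auto simp: unitary_rep_def is_rep_def perm_rep_def)
qed

lemma normal_lcos_fixed:
  fixes G (structure)
  assumes N: "N \<lhd> G" and n: "n \<in> N" and a: "a \<in> carrier G"
  shows "n <# (a <# N) = a <# N"
proof -
  interpret normal N G by fact
  have k: "inv a \<otimes> n \<otimes> a \<in> N" by (rule inv_op_closed1[OF a n])
  have "n <# (a <# N) = (a \<otimes> (inv a \<otimes> n \<otimes> a)) <# N"
    using a mem_carrier[OF n] subset by (simp add: lcos_m_assoc m_assoc[symmetric])
  also have "\<dots> = a <# (inv a \<otimes> n \<otimes> a <# N)"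
    using a mem_carrier[OF k] subset by (simp add: lcos_m_assoc)
  also have "inv a \<otimes> n \<otimes> a <# N = N"
    using k by (intro coset_join3) (auto simp: is_subgroup)
  finally show ?thesis .
qed

text \<open>The permutation representation on the cosets of N has kernel exactly N.\<close>
lemma exists_unitary_rep_separating:
  fixes G (structure)
  assumes "group G" and "finite (carrier G)" and N: "N \<lhd> G"
    and g: "g \<in> carrier G" and "g \<notin> N"
  obtains d \<rho> where "unitary_rep G d \<rho>" and "N \<subseteq> rep_kernel G d \<rho>" and "\<rho> g \<noteq> 1\<^sub>m d"
proof -
  interpret group G by fact
  have NS: "subgroup N G" using N by (rule normal_imp_subgroup)
  then have Nc: "N \<subseteq> carrier G" by (rule subgroup.subset)
  obtain xs where xs: "distinct xs" "set xs = lcosets N"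
    using finite_distinct_list[of "lcosets N"] \<open>finite (carrier G)\<close> by (auto simp: LCOSETS_def)
  let ?act = "l_coset G"
  have cosets: "Q \<in> set xs \<longleftrightarrow> (\<exists>a\<in>carrier G. Q = a <# N)" for Q
    using xs by (auto simp: LCOSETS_def)
  have "unitary_rep G (length xs) (perm_rep ?act xs)"
    by (rule perm_rep_unitary) (use xs cosets Nc in \<open>auto simp: lcos_m_assoc lcos_mult_one m_assoc\<close>)
  moreover have "N \<subseteq> rep_kernel G (length xs) (perm_rep ?act xs)"
    using xs cosets Nc normal_lcos_fixed[OF N]
    by (auto simp: rep_kernel_def perm_rep_eq_one_iff)
  moreover have "perm_rep ?act xs g \<noteq> 1\<^sub>m (length xs)"
  proof
    assume "perm_rep ?act xs g = 1\<^sub>m (length xs)"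
    moreover have "N \<in> set xs" using cosets[of N] Nc by (metis one_closed lcos_mult_one)
    ultimately have "g <# N = N" using xs by (simp add: perm_rep_eq_one_iff)
    then show False using lcos_self[OF g NS] \<open>g \<notin> N\<close> by simp
  qed
  ultimately show ?thesis by (rule that)
qed

section \<open>Characters and their centres\<close>

lemma complex_eq_one_if_Re_eq_one:
  assumes "cmod w \<le> 1" and "Re w = 1"
  shows "w = 1"
proof -
  have "(Im w)\<^sup>2 \<le> 0" using assms cmod_power2[of w] power_le_one[of "cmod w" 2] by simp
  with \<open>Re w = 1\<close> show ?thesis by (simp add: complex_eq_iff)
qed

lemma norm_sum_eq_card_imp_const:
  fixes z :: "'i \<Rightarrow> complex"
  assumes I: "finite I" "I \<noteq> {}" and le1: "\<And>i. i \<in> I \<Longrightarrow> cmod (z i) \<le> 1"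
    and sum: "cmod (\<Sum>i\<in>I. z i) = card I"
  obtains c where "cmod c = 1" and "\<And>i. i \<in> I \<Longrightarrow> z i = c"
proof
  define s where "s = (\<Sum>i\<in>I. z i)"
  define c where "c = s / of_nat (card I)"
  have card: "card I > 0" using I by (simp add: card_gt_0_iff)
  show c1: "cmod c = 1" using sum card by (simp add: c_def s_def norm_divide)
  have cc: "c * cnj c = 1" using c1 by (simp add: complex_norm_square[symmetric])
  define t where "t i = Re (cnj c * z i)" for i
  have t_le: "t i \<le> 1" if "i \<in> I" for i
  proof -
    have "t i \<le> cmod (cnj c * z i)" unfolding t_def by (rule complex_Re_le_cmod)
    also have "\<dots> \<le> 1" using le1[OF that] c1 by (simp add: norm_mult)
    finally show ?thesis .
  qed
  have "(\<Sum>i\<in>I. t i) = Re (cnj c * s)"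
    unfolding t_def s_def sum_distrib_left Re_sum ..
  also have "cnj c * s = of_real ((cmod s)\<^sup>2) / of_nat (card I)"
    unfolding c_def complex_norm_square by (simp add: mult.commute)
  also have "Re \<dots> = card I"
    using sum card by (simp add: s_def Re_divide_of_nat power2_eq_square)
  finally have "(\<Sum>i\<in>I. 1 - t i) = 0" by (simp add: sum_subtractf)
  then have t1: "t i = 1" if "i \<in> I" for i
    using sum_nonneg_eq_0_iff[OF I(1), of "\<lambda>i. 1 - t i"] t_le that by auto
  fix i assume i: "i \<in> I"
  have "cmod (cnj c * z i) \<le> 1" using le1[OF i] c1 by (simp add: norm_mult)
  moreover have "Re (cnj c * z i) = 1" using t1[OF i] by (simp add: t_def)
  ultimately have "cnj c * z i = 1" by (rule complex_eq_one_if_Re_eq_one)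
  have "z i = c * cnj c * z i" using cc by simp
  also have "\<dots> = c" using \<open>cnj c * z i = 1\<close> by (simp add: mult.assoc)
  finally show "z i = c" .
qed

lemma unitary_mat_col_norm:
  assumes A: "A \<in> carrier_mat d d" and unitary: "mat_adjoint A * A = 1\<^sub>m d" and j: "j < d"
  shows "(\<Sum>i<d. (cmod (A $$ (i, j)))\<^sup>2) = 1"
proof -
  have "of_real (\<Sum>i<d. (cmod (A $$ (i, j)))\<^sup>2) = (mat_adjoint A * A) $$ (j, j)"
    using A j
    by (auto simp: scalar_prod_def atLeast0LessThan complex_norm_square[unfolded of_real_power]
        mult.commute intro!: sum.cong)
  also have "\<dots> = 1" using unitary j by simp
  finally show ?thesis by (simp only: of_real_eq_1_iff)
qed

lemma unitary_mat_scalar_if_trace_norm: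
  fixes A :: "complex mat"
  assumes A: "A \<in> carrier_mat d d" and unitary: "mat_adjoint A * A = 1\<^sub>m d"
    and tr: "cmod (mat_trace A) = d"
  obtains c where "A = c \<cdot>\<^sub>m 1\<^sub>m d"
proof (cases "d = 0")
  case True
  then show ?thesis using A by (intro that[of 0] eq_matI) auto
next
  case False
  note col = unitary_mat_col_norm[OF A unitary]
  have diag_le: "cmod (A $$ (i, i)) \<le> 1" if i: "i < d" for i
  proof -
    have "(cmod (A $$ (i, i)))\<^sup>2 \<le> (\<Sum>l<d. (cmod (A $$ (l, i)))\<^sup>2)"
      by (rule member_le_sum) (use i in auto)
    then show ?thesis using col[OF i] by (simp add: power_le_one_iff)
  qed
  have "cmod (\<Sum>i<d. A $$ (i, i)) = card {..<d}"
    using tr A by (simp add: mat_trace_def)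
  then obtain c where c1: "cmod c = 1" and diag: "\<And>i. i < d \<Longrightarrow> A $$ (i, i) = c"
    using norm_sum_eq_card_imp_const[of "{..<d}" "\<lambda>i. A $$ (i, i)"] False diag_le by auto
  have off: "A $$ (i, j) = 0" if i: "i < d" and j: "j < d" and "i \<noteq> j" for i j
  proof -
    have "(\<Sum>l<d. (cmod (A $$ (l, j)))\<^sup>2)
        = (cmod (A $$ (j, j)))\<^sup>2 + (\<Sum>l\<in>{..<d} - {j}. (cmod (A $$ (l, j)))\<^sup>2)"
      using j by (subst sum.remove[of "{..<d}" j]) auto
    then have "(\<Sum>l\<in>{..<d} - {j}. (cmod (A $$ (l, j)))\<^sup>2) = 0"
      using col[OF j] diag[OF j] c1 by simp
    then show ?thesis using i \<open>i \<noteq> j\<close> by (simp add: sum_nonneg_eq_0_iff)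
  qed
  show ?thesis by (rule that[of c], rule eq_matI) (use A diag off in auto)
qed

definition rep_char :: "('a, 'b) monoid_scheme \<Rightarrow> ('a \<Rightarrow> complex mat) \<Rightarrow> 'a \<Rightarrow> complex" where
  "rep_char G \<rho> g = (if g \<in> carrier G then mat_trace (\<rho> g) else 0)"

lemma rep_char_Irr: "irreducible_rep G d \<rho> \<Longrightarrow> rep_char G \<rho> \<in> Irr G"
  unfolding Irr_def rep_char_def by blast

lemma mat_trace_one [simp]: "mat_trace (1\<^sub>m d) = of_nat d"
  by (simp add: mat_trace_def)

lemma char_center_rep_char:
  fixes G (structure)
  assumes "group G" and "is_rep G d \<rho>"
  shows "char_center G (rep_char G \<rho>) = {g \<in> carrier G. cmod (mat_trace (\<rho> g)) = d}"
proof -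
  have "complex_of_real x = of_nat d \<longleftrightarrow> x = real d" for x
    by (metis of_real_eq_iff of_real_of_nat_eq)
  then show ?thesis
    using assms by (auto simp: char_center_def rep_char_def is_rep_one group.is_monoid monoid.one_closed)
qed

lemma rep_kernel_subset_char_center:
  fixes G (structure)
  assumes "group G" and "is_rep G d \<rho>"
  shows "rep_kernel G d \<rho> \<subseteq> char_center G (rep_char G \<rho>)"
  using assms by (auto simp: char_center_rep_char rep_kernel_def)

lemma unitary_rep_scalar_on_char_center:
  fixes G (structure)
  assumes G: "group G" and \<rho>: "unitary_rep G d \<rho>" and g: "g \<in> char_center G (rep_char G \<rho>)"
  obtains c where "\<rho> g = c \<cdot>\<^sub>m 1\<^sub>m d"
proof -
  interpret group G by fact
  note rep = unitary_repD(1)[OF \<rho>]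
  have gc: "g \<in> carrier G" and tr: "cmod (mat_trace (\<rho> g)) = d"
    using g by (auto simp: char_center_rep_char[OF G rep])
  have "mat_adjoint (\<rho> g) * \<rho> g = \<rho> (inv g) * \<rho> g"
    using gc by (simp add: unitary_repD(2)[OF \<rho>])
  also have "\<dots> = \<rho> (inv g \<otimes> g)"
    using gc by (intro is_rep_mult[OF rep, symmetric]) auto
  also have "\<dots> = 1\<^sub>m d" using gc by (simp add: is_rep_one[OF rep])
  finally show ?thesis
    using unitary_mat_scalar_if_trace_norm[OF is_rep_carrier[OF rep gc] _ tr] that by blast
qed

lemma rep_kernel_subgroup:
  fixes G (structure)
  assumes "group G" and rep: "is_rep G d \<rho>"
  shows "subgroup (rep_kernel G d \<rho>) G"
proof -
  interpret group G by fact
  have "\<rho> (inv a) = 1\<^sub>m d" if "a \<in> carrier G" "\<rho> a = 1\<^sub>m d" for a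
  proof -
    have "\<rho> (inv a) = \<rho> (inv a) * \<rho> a"
      using that is_rep_carrier[OF rep inv_closed[OF that(1)]] by simp
    also have "\<dots> = \<rho> (inv a \<otimes> a)"
      using that by (intro is_rep_mult[OF rep, symmetric]) auto
    also have "\<dots> = 1\<^sub>m d" using that by (simp add: is_rep_one[OF rep])
    finally show ?thesis .
  qed
  then show ?thesis
    by (intro subgroupI) (auto simp: rep_kernel_def is_rep_one[OF rep] is_rep_mult[OF rep])
qed

lemma commutator_in_rep_kernel:
  fixes G (structure)
  assumes "group G" and rep: "is_rep G d \<rho>" and a: "a \<in> carrier G" and b: "b \<in> carrier G"
    and scalar: "\<rho> a = c \<cdot>\<^sub>m 1\<^sub>m d"
  shows "inv a \<otimes> inv b \<otimes> a \<otimes> b \<in> rep_kernel G d \<rho>"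
proof -
  interpret group G by fact
  have "\<rho> a * \<rho> b = \<rho> b * \<rho> a"
    using is_rep_carrier[OF rep b]
    by (simp add: scalar mult_smult_assoc_mat[of _ d d _ d] mult_smult_distrib[of _ d d _ d])
  then have comm: "\<rho> (a \<otimes> b) = \<rho> (b \<otimes> a)" using a b by (simp add: is_rep_mult[OF rep])
  have "\<rho> (inv (b \<otimes> a) \<otimes> (a \<otimes> b)) = \<rho> (inv (b \<otimes> a)) * \<rho> (a \<otimes> b)"
    using a b by (intro is_rep_mult[OF rep]) auto
  also have "\<dots> = \<rho> (inv (b \<otimes> a)) * \<rho> (b \<otimes> a)" by (simp only: comm)
  also have "\<dots> = \<rho> (inv (b \<otimes> a) \<otimes> (b \<otimes> a))"
    using a b by (intro is_rep_mult[OF rep, symmetric]) auto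
  also have "\<dots> = 1\<^sub>m d" using a b by (simp add: is_rep_one[OF rep])
  finally have "\<rho> (inv (b \<otimes> a) \<otimes> (a \<otimes> b)) = 1\<^sub>m d" .
  moreover have "inv (b \<otimes> a) \<otimes> (a \<otimes> b) = inv a \<otimes> inv b \<otimes> a \<otimes> b"
    using a b by (simp add: inv_mult_group m_assoc)
  ultimately show ?thesis using a b by (simp add: rep_kernel_def)
qed

lemma commutator_subgroup_subset_rep_kernel:
  fixes G (structure)
  assumes G: "group G" and \<rho>: "unitary_rep G d \<rho>" and A: "A \<subseteq> char_center G (rep_char G \<rho>)"
  shows "commutator_subgroup G A (carrier G) \<subseteq> rep_kernel G d \<rho>"
  unfolding commutator_subgroup_def
proof (rule group.generate_subgroup_incl[OF G _ rep_kernel_subgroup[OF G unitary_repD(1)[OF \<rho>]]])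
  show "(\<Union>a\<in>A. \<Union>b\<in>carrier G. {inv a \<otimes> inv b \<otimes> a \<otimes> b}) \<subseteq> rep_kernel G d \<rho>"
  proof (intro UN_least subsetI)
    fix a b z assume a: "a \<in> A" and b: "b \<in> carrier G" and "z \<in> {inv a \<otimes> inv b \<otimes> a \<otimes> b}"
    have ac: "a \<in> carrier G" using A a by (auto simp: char_center_def)
    obtain c where "\<rho> a = c \<cdot>\<^sub>m 1\<^sub>m d"
      using unitary_rep_scalar_on_char_center[OF G \<rho>] A a by blast
    then show "z \<in> rep_kernel G d \<rho>"
      using commutator_in_rep_kernel[OF G unitary_repD(1)[OF \<rho>] ac b] \<open>z \<in> _\<close> by simp
  qed
qed

section \<open>The chain of centres\<close>

lemma exists_irreducible_rep_separating:
  fixes G (structure)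
  assumes G: "group G" and "finite (carrier G)" and "N \<lhd> G" and g: "g \<in> carrier G" "g \<notin> N"
  obtains d \<rho> where "unitary_rep G d \<rho>" and "irreducible_rep G d \<rho>"
    and "N \<subseteq> rep_kernel G d \<rho>" and "\<rho> g \<noteq> 1\<^sub>m d"
proof -
  obtain d0 \<rho>0 where "unitary_rep G d0 \<rho>0" "N \<subseteq> rep_kernel G d0 \<rho>0" "\<rho>0 g \<noteq> 1\<^sub>m d0"
    using exists_unitary_rep_separating[OF assms] .
  moreover obtain d \<rho> where "unitary_rep G d \<rho>" "irreducible_rep G d \<rho>"
    "rep_kernel G d0 \<rho>0 \<subseteq> rep_kernel G d \<rho>" "\<rho> g \<noteq> 1\<^sub>m d"
    using exists_irreducible_constituent[OF G g(1) \<open>unitary_rep G d0 \<rho>0\<close> \<open>\<rho>0 g \<noteq> 1\<^sub>m d0\<close>] by blast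
  ultimately show ?thesis using that[of d \<rho>] by blast
qed

lemma commutator_subgroup_subset_carrier:
  fixes G (structure)
  assumes "group G" and "A \<subseteq> carrier G" and "B \<subseteq> carrier G"
  shows "commutator_subgroup G A B \<subseteq> carrier G"
proof -
  interpret group G by fact
  show ?thesis
    unfolding commutator_subgroup_def using assms(2,3) by (intro generate_incl) (auto intro!: m_closed)
qed

lemma commutator_subgroup_subset_normal:
  fixes G (structure)
  assumes G: "group G" and "finite (carrier G)" and N: "N \<lhd> G" and A: "A \<subseteq> carrier G"
    and centre: "\<And>d \<rho>. irreducible_rep G d \<rho> \<Longrightarrow> N \<subseteq> char_center G (rep_char G \<rho>) \<Longrightarrow>
      A \<subseteq> char_center G (rep_char G \<rho>)"
  shows "commutator_subgroup G A (carrier G) \<subseteq> N"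
proof
  fix g assume g: "g \<in> commutator_subgroup G A (carrier G)"
  show "g \<in> N"
  proof (rule ccontr)
    assume "g \<notin> N"
    moreover have "g \<in> carrier G"
      using commutator_subgroup_subset_carrier[OF G A] g by blast
    ultimately obtain d \<rho> where \<rho>: "unitary_rep G d \<rho>" "irreducible_rep G d \<rho>"
      and ker: "N \<subseteq> rep_kernel G d \<rho>" and "\<rho> g \<noteq> 1\<^sub>m d"
      using exists_irreducible_rep_separating[OF G assms(2) N] by blast
    have "N \<subseteq> char_center G (rep_char G \<rho>)"
      using ker rep_kernel_subset_char_center[OF G unitary_repD(1)[OF \<rho>(1)]] by blast
    then have "g \<in> rep_kernel G d \<rho>"
      using commutator_subgroup_subset_rep_kernel[OF G \<rho>(1) centre[OF \<rho>(2)]] g by blast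
    with \<open>\<rho> g \<noteq> 1\<^sub>m d\<close> show False by (simp add: rep_kernel_def)
  qed
qed

lemma decreasing_chain_antimono:
  assumes dec: "\<And>i. i < n \<Longrightarrow> C (Suc i) \<subset> C i" and "k \<le> j" and "j \<le> n"
  shows "C j \<subseteq> C k"
proof -
  have "C (min (Suc l) n) \<subseteq> C (min l n)" for l
    using dec[of l] by (cases "l < n") (auto simp: min_def)
  then have "C (min j n) \<subseteq> C (min k n)"
    using lift_Suc_antimono_le[of "\<lambda>l. C (min l n)"] \<open>k \<le> j\<close> by blast
  then show ?thesis using assms(2,3) by (simp add: min_absorb1)
qed

theorem lemma4p1:
  fixes G (structure) and C :: "nat \<Rightarrow> 'a set" and n :: nat and N :: "'a set"
  assumes "group G" and "finite (carrier G)" and "nested G"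
    and "C 0 = carrier G"
    and "\<And>i. i < n \<Longrightarrow> C (Suc i) \<subset> C i"
    and "{C i | i. i \<le> n} = char_center G ` Irr G"
    and "N \<lhd> G"
  shows "\<forall>i \<in> {1..n}. commutator_subgroup G (C (i - 1)) (carrier G) \<subseteq> N \<or> N \<subseteq> C i"
proof (intro ballI disjCI)
  note centres = assms(6) and chain = decreasing_chain_antimono[of n C, OF assms(5)]
  fix i assume i: "i \<in> {1..n}" and "\<not> N \<subseteq> C i"
  have "C (i - 1) \<in> {C i | i. i \<le> n}" using i by auto
  then obtain \<chi> where "C (i - 1) = char_center G \<chi>" unfolding centres by blast
  then have "C (i - 1) \<subseteq> carrier G" by (simp add: char_center_def)
  then show "commutator_subgroup G (C (i - 1)) (carrier G) \<subseteq> N"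
  proof (rule commutator_subgroup_subset_normal[OF assms(1,2,7)])
    fix d \<rho> assume "irreducible_rep G d \<rho>" and N: "N \<subseteq> char_center G (rep_char G \<rho>)"
    then have "char_center G (rep_char G \<rho>) \<in> {C i | i. i \<le> n}"
      unfolding centres by (intro imageI rep_char_Irr)
    then obtain j where j: "j \<le> n" and Cj: "C j = char_center G (rep_char G \<rho>)" by blast
    with N \<open>\<not> N \<subseteq> C i\<close> have "\<not> C j \<subseteq> C i" by blast
    then have "j < i" using chain[of i j] j not_less by blast
    then show "C (i - 1) \<subseteq> char_center G (rep_char G \<rho>)"
      using chain[of j "i - 1"] i Cj by auto
  qed
qed

end
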